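(* Let $M/K$ be a finite extension of fields with $M$ not algebraically closed. If $M$ has a first-order model of $\mathbb{Z}$ in the language of rings augmented by finitely many parameters from $M$, then $K$ has a first-order model of $\mathbb{Z}$ in the language of rings augmented by finitely many parameters from $K$.
   Context: A first-order model of $\mathbb{Z}$ (with addition and multiplication) in a field $L$ in the language of rings with parameters is a bijection from $\mathbb{Z}$ onto a subset $D\subseteq L^d$ definable with those parameters, such that the images of the graphs of addition and multiplication are definable subsets of $D^3$. *)

theory Defs
  imports Main "HOL-Computational_Algebra.Polynomial"
begin

datatype 'a rterm =
    RVar nat
  | RConst 'a
  | RZero | ROne
  | RAdd "'a rterm" "'a rterm"
  | RMul "'a rterm" "'a rterm"
  | RNeg "'a rterm"

datatype 'a rform =
    FEq "'a rterm" "'a rterm"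
  | FNot "'a rform"
  | FAnd "'a rform" "'a rform"
  | FEx nat "'a rform"

fun tparams :: "'a rterm \<Rightarrow> 'a set" where
  "tparams (RVar i) = {}"
| "tparams (RConst c) = {c}"
| "tparams RZero = {}"
| "tparams ROne = {}"
| "tparams (RAdd s t) = tparams s \<union> tparams t"
| "tparams (RMul s t) = tparams s \<union> tparams t"
| "tparams (RNeg t) = tparams t"

fun fparams :: "'a rform \<Rightarrow> 'a set" where
  "fparams (FEq s t) = tparams s \<union> tparams t"
| "fparams (FNot p) = fparams p"
| "fparams (FAnd p q) = fparams p \<union> fparams q"
| "fparams (FEx i p) = fparams p"

fun teval :: "(nat \<Rightarrow> 'a::field) \<Rightarrow> 'a rterm \<Rightarrow> 'a" where
  "teval e (RVar i) = e i"
| "teval e (RConst c) = c"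
| "teval e RZero = 0"
| "teval e ROne = 1"
| "teval e (RAdd s t) = teval e s + teval e t"
| "teval e (RMul s t) = teval e s * teval e t"
| "teval e (RNeg t) = - teval e t"

text \<open>Satisfaction in the field with carrier S (a subfield of the ambient
  type 'a); quantifiers range over S.\<close>
fun sat :: "'a::field set \<Rightarrow> (nat \<Rightarrow> 'a) \<Rightarrow> 'a rform \<Rightarrow> bool" where
  "sat S e (FEq s t) = (teval e s = teval e t)"
| "sat S e (FNot p) = (\<not> sat S e p)"
| "sat S e (FAnd p q) = (sat S e p \<and> sat S e q)"
| "sat S e (FEx i p) = (\<exists>a\<in>S. sat S (e(i := a)) p)"

definition tuples :: "'a set \<Rightarrow> nat \<Rightarrow> 'a list set" where
  "tuples S d = {xs. length xs = d \<and> set xs \<subseteq> S}"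

definition definable :: "'a::field set \<Rightarrow> nat \<Rightarrow> 'a list set \<Rightarrow> bool" where
  "definable S d D \<longleftrightarrow> (\<exists>\<phi>. fparams \<phi> \<subseteq> S \<and>
     D = {xs \<in> tuples S d. sat S (\<lambda>i. if i < d then xs ! i else 0) \<phi>})"

definition has_model_of_Z :: "'a::field set \<Rightarrow> bool" where
  "has_model_of_Z S \<longleftrightarrow> (\<exists>d (f :: int \<Rightarrow> 'a list) D.
     D \<subseteq> tuples S d \<and> bij_betw f UNIV D \<and> definable S d D \<and>
     definable S (3 * d) {f a @ f b @ f (a + b) | a b. True} \<and>
     definable S (3 * d) {f a @ f b @ f (a * b) | a b. True})"

definition is_subfield :: "'a::field set \<Rightarrow> bool" where
  "is_subfield K \<longleftrightarrow> 0 \<in> K \<and> 1 \<in> K \<and> (\<forall>x\<in>K. \<forall>y\<in>K. x + y \<in> K \<and> x * y \<in> K)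
     \<and> (\<forall>x\<in>K. - x \<in> K \<and> inverse x \<in> K)"

text \<open>M (the whole type) is a finite-dimensional K-vector space.\<close>
definition finite_ext :: "'a::field set \<Rightarrow> bool" where
  "finite_ext K \<longleftrightarrow> (\<exists>B. finite B \<and> (\<forall>x::'a. \<exists>c. (\<forall>b\<in>B. c b \<in> K) \<and> x = (\<Sum>b\<in>B. c b * b)))"

definition alg_closed_field :: "'a::field itself \<Rightarrow> bool" where
  "alg_closed_field _ \<longleftrightarrow> (\<forall>p :: 'a poly. degree p \<ge> 1 \<longrightarrow> (\<exists>x. poly p x = 0))"

end

theory Submission
  imports Defs
begin

text \<open>
  Proof idea (interpretation by restriction of scalars).  Let \<open>M\<close> be a field that is a
  finite-dimensional vector space over a subfield \<open>K\<close>, with basis \<open>b\<^sub>0, \<dots>, b\<^sub>n\<^sub>-\<^sub>1\<close>.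
  Every element of \<open>M\<close> is coded by its coordinate vector in \<open>K\<^sup>n\<close>, and this coding turns
  every ring formula over \<open>M\<close> (with parameters from \<open>M\<close>) into a ring formula over \<open>K\<close>
  (with parameters from \<open>K\<close>, namely the coordinates of the parameters and the structure
  constants of the multiplication): variable \<open>i\<close> becomes the block of variables
  \<open>n*i, \<dots>, n*i+n-1\<close>, an equation becomes \<open>n\<close> coordinate equations, and a quantifier
  becomes a block of \<open>n\<close> quantifiers.  Consequently a definable subset of \<open>M\<^sup>d\<close> is carried to a
  definable subset of \<open>K\<^sup>n\<^sup>d\<close>, and composing a definable model of \<open>\<int>\<close> in \<open>M\<close> with the
  coding gives a definable model of \<open>\<int>\<close> in \<open>K\<close>.

  The coding argument does not
  need that \<open>M\<close> is not algebraically closed.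
\<close>

fun tsum :: "'a rterm list \<Rightarrow> 'a rterm" where
  "tsum [] = RZero"
| "tsum (t # ts) = RAdd t (tsum ts)"

lemma teval_tsum: "teval e (tsum ts) = sum_list (map (teval e) ts)"
  by (induction ts) auto

lemma tparams_tsum: "tparams (tsum ts) = (\<Union>t\<in>set ts. tparams t)"
  by (induction ts) auto

fun conj :: "'a rform list \<Rightarrow> 'a rform" where
  "conj [] = FEq RZero RZero"
| "conj (p # ps) = FAnd p (conj ps)"

lemma sat_conj: "sat S e (conj ps) = (\<forall>p\<in>set ps. sat S e p)"
  by (induction ps) auto

lemma fparams_conj: "fparams (conj ps) = (\<Union>p\<in>set ps. fparams p)"
  by (induction ps) auto

lemma fparams_exs: "fparams (foldr FEx vs p) = fparams p"
  by (induction vs) auto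

lemma sat_exs: "sat S e (foldr FEx vs p) =
   (\<exists>a. (\<forall>v\<in>set vs. a v \<in> S) \<and> sat S (\<lambda>j. if j \<in> set vs then a j else e j) p)"
proof (induction vs arbitrary: e)
  case Nil
  then show ?case by simp
next
  case (Cons v vs)
  show ?case
  proof
    assume "sat S e (foldr FEx (v # vs) p)"
    then obtain x a where x: "x \<in> S" and a: "\<forall>w\<in>set vs. a w \<in> S"
      and s: "sat S (\<lambda>j. if j \<in> set vs then a j else (e(v := x)) j) p"
      using Cons by auto
    define a' where "a' = (\<lambda>j. if j \<in> set vs then a j else x)"
    have "(\<lambda>j. if j \<in> set vs then a j else (e(v := x)) j) =
          (\<lambda>j. if j \<in> set (v # vs) then a' j else e j)"
      by (auto simp: a'_def)
    then show "\<exists>a. (\<forall>v\<in>set (v # vs). a v \<in> S) \<and>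
        sat S (\<lambda>j. if j \<in> set (v # vs) then a j else e j) p"
      using s x a by (intro exI[of _ a']) (auto simp: a'_def)
  next
    assume "\<exists>a. (\<forall>v\<in>set (v # vs). a v \<in> S) \<and>
        sat S (\<lambda>j. if j \<in> set (v # vs) then a j else e j) p"
    then obtain a where a: "\<forall>w\<in>set (v # vs). a w \<in> S"
      and s: "sat S (\<lambda>j. if j \<in> set (v # vs) then a j else e j) p" by blast
    have "(\<lambda>j. if j \<in> set vs then a j else (e(v := a v)) j) =
          (\<lambda>j. if j \<in> set (v # vs) then a j else e j)"
      by auto
    then have "sat S (e(v := a v)) (foldr FEx vs p)"
      unfolding Cons.IH using a s by (intro exI[of _ a]) simp
    then show "sat S e (foldr FEx (v # vs) p)" using a by auto
  qed
qed

abbreviation tuple_env :: "nat \<Rightarrow> 'a::zero list \<Rightarrow> nat \<Rightarrow> 'a" where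
  "tuple_env d xs \<equiv> (\<lambda>i. if i < d then xs ! i else 0)"

section \<open>Finite bases over a subfield\<close>

definition spans :: "'a::field set \<Rightarrow> 'a set \<Rightarrow> bool" where
  "spans K B \<longleftrightarrow> (\<forall>x. \<exists>c. (\<forall>b\<in>B. c b \<in> K) \<and> x = (\<Sum>b\<in>B. c b * b))"

lemma spans_remove:
  assumes sf: "is_subfield K" and fin: "finite B" and sp: "spans K B"
    and c: "\<forall>y\<in>B. c y \<in> K" "(\<Sum>y\<in>B. c y * y) = 0"
    and b0: "b0 \<in> B" "c b0 \<noteq> 0"
  shows "spans K (B - {b0})"
  unfolding spans_def
proof
  fix x
  let ?B' = "B - {b0}"
  let ?r = "\<lambda>y. - (c y * inverse (c b0))"
  have "c b0 * b0 + (\<Sum>y\<in>?B'. c y * y) = 0"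
    using c(2) sum.remove[OF fin b0(1), of "\<lambda>y. c y * y"] by simp
  then have "c b0 * b0 = - (\<Sum>y\<in>?B'. c y * y)"
    by (simp add: eq_neg_iff_add_eq_0)
  then have "b0 = inverse (c b0) * (- (\<Sum>y\<in>?B'. c y * y))"
    using b0(2) by (metis field_class.field_inverse mult.assoc mult.commute mult_1)
  also have "\<dots> = (\<Sum>y\<in>?B'. ?r y * y)"
    by (simp add: sum_distrib_left sum_negf[symmetric] mult_ac)
  finally have b0_eq: "b0 = (\<Sum>y\<in>?B'. ?r y * y)" .
  obtain d where d: "\<forall>y\<in>B. d y \<in> K" "x = (\<Sum>y\<in>B. d y * y)"
    using sp unfolding spans_def by blast
  have "x = d b0 * b0 + (\<Sum>y\<in>?B'. d y * y)"
    using d(2) sum.remove[OF fin b0(1), of "\<lambda>y. d y * y"] by simp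
  also have "\<dots> = (\<Sum>y\<in>?B'. d b0 * (?r y * y) + d y * y)"
    by (subst b0_eq) (simp only: sum_distrib_left sum.distrib[symmetric])
  also have "\<dots> = (\<Sum>y\<in>?B'. (d y + d b0 * ?r y) * y)"
    by (intro sum.cong refl) (simp add: algebra_simps)
  finally have "x = (\<Sum>y\<in>?B'. (d y + d b0 * ?r y) * y)" .
  moreover have "\<forall>y\<in>?B'. d y + d b0 * ?r y \<in> K"
    using d(1) c(1) b0(1) sf by (simp add: is_subfield_def del: mult_minus_right)
  ultimately show "\<exists>c. (\<forall>b\<in>?B'. c b \<in> K) \<and> x = (\<Sum>b\<in>?B'. c b * b)"
    by (intro exI[of _ "\<lambda>y. d y + d b0 * ?r y"]) simp
qed

lemma minimal_spanning_independent:
  assumes sf: "is_subfield K" and fin: "finite B" and sp: "spans K B"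
    and minimal: "\<And>B'. finite B' \<Longrightarrow> spans K B' \<Longrightarrow> card B \<le> card B'"
    and c: "\<forall>y\<in>B. c y \<in> K" "(\<Sum>y\<in>B. c y * y) = 0"
  shows "\<forall>y\<in>B. c y = 0"
proof (rule ccontr)
  assume "\<not> (\<forall>y\<in>B. c y = 0)"
  then obtain b0 where b0: "b0 \<in> B" "c b0 \<noteq> 0" by blast
  then have "spans K (B - {b0})"
    using spans_remove[OF sf fin sp c] by blast
  then have "card B \<le> card (B - {b0})"
    using minimal fin by simp
  moreover have "card (B - {b0}) < card B"
    using fin b0(1) by (meson card_Diff1_less)
  ultimately show False by simp
qed

locale kbasis =
  fixes K :: "'a::field set" and n :: nat and b :: "nat \<Rightarrow> 'a"
  assumes sf: "is_subfield K"
    and span: "\<And>x. \<exists>c. (\<forall>k<n. c k \<in> K) \<and> x = (\<Sum>k<n. c k * b k)"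
    and indep: "\<And>c. \<forall>k<n. c k \<in> K \<Longrightarrow> (\<Sum>k<n. c k * b k) = 0 \<Longrightarrow> \<forall>k<n. c k = 0"

lemma kbasis_enumerate:
  assumes sf: "is_subfield K" and sp: "spans K B"
    and ind: "\<And>c. \<forall>y\<in>B. c y \<in> K \<Longrightarrow> (\<Sum>y\<in>B. c y * y) = 0 \<Longrightarrow> \<forall>y\<in>B. c y = 0"
    and h: "bij_betw h {..<m} B"
  shows "kbasis K m h"
proof
  have reindex: "(\<Sum>k<m. g (h k)) = (\<Sum>y\<in>B. g y)" for g :: "'a \<Rightarrow> 'a"
    using sum.reindex_bij_betw[OF h] .
  have hB: "h k \<in> B" if "k < m" for k
    using h that by (auto simp: bij_betw_def)
  show "is_subfield K" by (rule sf)
  fix x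
  obtain c where c: "\<forall>y\<in>B. c y \<in> K" "x = (\<Sum>y\<in>B. c y * y)"
    using sp unfolding spans_def by blast
  then show "\<exists>c. (\<forall>k<m. c k \<in> K) \<and> x = (\<Sum>k<m. c k * h k)"
    using reindex[of "\<lambda>y. c y * y"] hB by (intro exI[of _ "\<lambda>k. c (h k)"]) auto
next
  fix c' :: "nat \<Rightarrow> 'a"
  assume c': "\<forall>k<m. c' k \<in> K" "(\<Sum>k<m. c' k * h k) = 0"
  define c where "c y = c' (inv_into {..<m} h y)" for y
  have inj: "inj_on h {..<m}" using h by (auto simp: bij_betw_def)
  have ch: "c (h k) = c' k" if "k < m" for k
    using inv_into_f_f[OF inj] that by (simp add: c_def)
  have "inv_into {..<m} h y \<in> {..<m}" if "y \<in> B" for y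
    using h that by (metis bij_betw_def inv_into_into)
  then have cK: "\<forall>y\<in>B. c y \<in> K" using c'(1) by (simp add: c_def)
  have "(\<Sum>y\<in>B. c y * y) = (\<Sum>k<m. c (h k) * h k)"
    using sum.reindex_bij_betw[OF h, of "\<lambda>y. c y * y"] by simp
  also have "\<dots> = 0" using c'(2) ch by simp
  finally have "\<forall>y\<in>B. c y = 0" using ind cK by blast
  then show "\<forall>k<m. c' k = 0"
    using ch h by (metis bij_betw_apply lessThan_iff)
qed

text \<open>A finite extension has a basis: take a spanning set of minimal cardinality.\<close>

lemma basis_exists:
  assumes sf: "is_subfield K" and fe: "finite_ext K"
  shows "\<exists>n b. kbasis K n b"
proof -
  have "\<exists>B. finite B \<and> spans K B"
    using fe unfolding finite_ext_def spans_def by blast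
  then obtain B where B: "finite B" "spans K B"
    and minimal: "\<forall>B'. finite B' \<and> spans K B' \<longrightarrow> card B \<le> card B'"
    using ex_has_least_nat[of "\<lambda>B. finite B \<and> spans K B" _ card] by blast
  obtain h where h: "bij_betw h {..<card B} B"
    using ex_bij_betw_nat_finite[OF B(1)] by (auto simp: lessThan_atLeast0)
  have "kbasis K (card B) h"
    using kbasis_enumerate[OF sf B(2) _ h] minimal_spanning_independent[OF sf B] minimal
    by blast
  then show ?thesis by blast
qed

context kbasis
begin

lemma K0: "0 \<in> K" and K1: "1 \<in> K"
  and Kadd: "x \<in> K \<Longrightarrow> y \<in> K \<Longrightarrow> x + y \<in> K"
  and Kmul: "x \<in> K \<Longrightarrow> y \<in> K \<Longrightarrow> x * y \<in> K"
  and Kneg: "x \<in> K \<Longrightarrow> - x \<in> K"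
  using sf by (auto simp: is_subfield_def)

lemma Kdiff: "x \<in> K \<Longrightarrow> y \<in> K \<Longrightarrow> x - y \<in> K"
  using Kadd Kneg by (metis diff_conv_add_uminus)

definition coord :: "'a \<Rightarrow> nat \<Rightarrow> 'a" where
  "coord x k = (if k < n then (SOME c. (\<forall>k<n. c k \<in> K) \<and> x = (\<Sum>k<n. c k * b k)) k else 0)"

lemma coord_spec: "(\<forall>k<n. coord x k \<in> K) \<and> x = (\<Sum>k<n. coord x k * b k)"
proof -
  let ?c = "SOME c. (\<forall>k<n. c k \<in> K) \<and> x = (\<Sum>k<n. c k * b k)"
  have "(\<forall>k<n. ?c k \<in> K) \<and> x = (\<Sum>k<n. ?c k * b k)"
    by (rule someI_ex[OF span])
  then show ?thesis by (auto simp: coord_def intro!: sum.cong)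
qed

lemma coord_K: "coord x k \<in> K"
  using coord_spec[of x] by (cases "k < n") (auto simp: coord_def K0)

lemma coord_sum: "(\<Sum>k<n. coord x k * b k) = x"
  using coord_spec[of x] by simp

lemma coords_eq_iff:
  assumes "\<forall>k<n. c k \<in> K" "\<forall>k<n. d k \<in> K"
  shows "(\<Sum>k<n. c k * b k) = (\<Sum>k<n. d k * b k) \<longleftrightarrow> (\<forall>k<n. c k = d k)"
proof
  assume "(\<Sum>k<n. c k * b k) = (\<Sum>k<n. d k * b k)"
  then have "(\<Sum>k<n. (c k - d k) * b k) = 0"
    by (simp add: left_diff_distrib sum_subtractf)
  then have "\<forall>k<n. c k - d k = 0"
    using assms by (intro indep) (auto intro: Kdiff)
  then show "\<forall>k<n. c k = d k" by simp
qed simp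

lemma coord_eq: "\<forall>k<n. c k \<in> K \<Longrightarrow> k < n \<Longrightarrow> coord (\<Sum>k<n. c k * b k) k = c k"
  using coords_eq_iff[of "coord (\<Sum>k<n. c k * b k)" c] coord_spec[of "\<Sum>k<n. c k * b k"]
  by auto

lemma ex_coords: "(\<exists>c. (\<forall>k<n. c k \<in> K) \<and> P (\<Sum>k<n. c k * b k)) \<longleftrightarrow> (\<exists>x. P x)"
proof
  assume "\<exists>x. P x"
  then obtain x where "P x" by blast
  then have "(\<forall>k<n. coord x k \<in> K) \<and> P (\<Sum>k<n. coord x k * b k)"
    by (simp add: coord_K coord_sum)
  then show "\<exists>c. (\<forall>k<n. c k \<in> K) \<and> P (\<Sum>k<n. c k * b k)" by blast
qed blast

lemma n_pos: "0 < n"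
  using coord_sum[of 1] by (cases n) auto

subsection \<open>Translation of terms and formulas\<close>

text \<open>Variable \<open>i\<close> of a formula over the ambient field is represented by the block of
  variables \<open>n*i, \<dots>, n*i+n-1\<close> over \<open>K\<close>, holding its coordinates.\<close>

definition block :: "nat \<Rightarrow> nat list" where
  "block i = map (\<lambda>k. n * i + k) [0..<n]"

lemma set_block: "set (block i) = (\<lambda>k. n * i + k) ` {..<n}"
  unfolding block_def set_map set_upt atLeast0LessThan ..

lemma mem_block: "k < n \<Longrightarrow> n * j + k \<in> set (block i) \<longleftrightarrow> j = i"
proof
  assume k: "k < n" and "n * j + k \<in> set (block i)"
  then obtain k' where k': "k' < n" "n * j + k = n * i + k'"
    unfolding set_block by blast
  have "j = (n * j + k) div n" using k by simp
  also have "\<dots> = (n * i + k') div n" using k' by simp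
  also have "\<dots> = i" using k' by simp
  finally show "j = i" .
qed (auto simp: set_block)

lemma ball_block: "(\<forall>v\<in>set (block i). P v) \<longleftrightarrow> (\<forall>k<n. P (n * i + k))"
  unfolding set_block by blast

text \<open>The value of an environment over \<open>K\<close>, read as an environment over the ambient field.\<close>

definition dec :: "(nat \<Rightarrow> 'a) \<Rightarrow> nat \<Rightarrow> 'a" where
  "dec e i = (\<Sum>k<n. e (n * i + k) * b k)"

text \<open>\<open>T t k\<close> computes the \<open>k\<close>-th coordinate of \<open>t\<close>; products use the structure constants
  \<open>coord (b i * b j) k\<close>.\<close>

primrec T :: "'a rterm \<Rightarrow> nat \<Rightarrow> 'a rterm" where
  "T (RVar i) k = RVar (n * i + k)"
| "T (RConst c) k = RConst (coord c k)"
| "T RZero k = RZero"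
| "T ROne k = RConst (coord 1 k)"
| "T (RAdd s t) k = RAdd (T s k) (T t k)"
| "T (RMul s t) k = tsum (map (\<lambda>i. tsum (map (\<lambda>j.
      RMul (RConst (coord (b i * b j) k)) (RMul (T s i) (T t j))) [0..<n])) [0..<n])"
| "T (RNeg t) k = RNeg (T t k)"

lemma tparams_T: "tparams (T t k) \<subseteq> K"
  by (induction t arbitrary: k) (auto simp: tparams_tsum coord_K)

lemma teval_K: "\<forall>j. e j \<in> K \<Longrightarrow> tparams t \<subseteq> K \<Longrightarrow> teval e t \<in> K"
  by (induction t) (auto intro: Kadd Kmul Kneg K0 K1)

lemma teval_T: "teval (dec e) t = (\<Sum>k<n. teval e (T t k) * b k)"
proof (induction t)
  case (RMul s t)
  define S where "S i = teval e (T s i)" for i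
  define U where "U j = teval e (T t j)" for j
  have "(\<Sum>k<n. teval e (T (RMul s t) k) * b k) =
     (\<Sum>k<n. (\<Sum>i<n. \<Sum>j<n. coord (b i * b j) k * (S i * U j)) * b k)"
    by (simp add: teval_tsum sum_list_distinct_conv_sum_set atLeast0LessThan S_def U_def o_def)
  also have "\<dots> = (\<Sum>k<n. \<Sum>i<n. \<Sum>j<n. coord (b i * b j) k * (S i * U j) * b k)"
    by (simp add: sum_distrib_right)
  also have "\<dots> = (\<Sum>i<n. \<Sum>j<n. \<Sum>k<n. coord (b i * b j) k * (S i * U j) * b k)"
    by (subst sum.swap) (rule sum.cong[OF refl], rule sum.swap)
  also have "\<dots> = (\<Sum>i<n. \<Sum>j<n. S i * U j * (\<Sum>k<n. coord (b i * b j) k * b k))"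
    by (simp add: sum_distrib_left mult.assoc mult.left_commute)
  also have "\<dots> = (\<Sum>i<n. \<Sum>j<n. S i * U j * (b i * b j))"
    by (simp only: coord_sum)
  also have "\<dots> = (\<Sum>i<n. \<Sum>j<n. (S i * b i) * (U j * b j))"
    by (simp add: mult_ac)
  also have "\<dots> = (\<Sum>i<n. S i * b i) * (\<Sum>j<n. U j * b j)"
    by (simp add: sum_product)
  also have "\<dots> = teval (dec e) (RMul s t)"
    using RMul by (simp add: S_def U_def)
  finally show ?case by simp
qed (simp_all add: dec_def coord_sum distrib_right sum.distrib sum_negf)

primrec F :: "'a rform \<Rightarrow> 'a rform" where
  "F (FEq s t) = conj (map (\<lambda>k. FEq (T s k) (T t k)) [0..<n])"
| "F (FNot p) = FNot (F p)"
| "F (FAnd p q) = FAnd (F p) (F q)"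
| "F (FEx i p) = foldr FEx (block i) (F p)"

lemma fparams_F: "fparams (F p) \<subseteq> K"
  by (induction p) (auto simp: fparams_conj fparams_exs dest: tparams_T[THEN subsetD])

lemma dec_override:
  "dec (\<lambda>j. if j \<in> set (block i) then a j else e j) = (dec e)(i := (\<Sum>k<n. a (n * i + k) * b k))"
proof
  fix j
  have "dec (\<lambda>j. if j \<in> set (block i) then a j else e j) j =
      (\<Sum>k<n. (if j = i then a (n * j + k) else e (n * j + k)) * b k)"
    unfolding dec_def by (intro sum.cong refl) (simp add: mem_block)
  then show "dec (\<lambda>j. if j \<in> set (block i) then a j else e j) j =
      ((dec e)(i := (\<Sum>k<n. a (n * i + k) * b k))) j"
    by (simp add: dec_def)
qed

lemma ex_shift: "(\<exists>a. Q (\<lambda>k. a (m + k))) \<longleftrightarrow> (\<exists>c :: nat \<Rightarrow> 'b. Q c)"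
  for m :: nat
proof
  assume "\<exists>c. Q c"
  then obtain c where "Q c" by blast
  then show "\<exists>a. Q (\<lambda>k. a (m + k))"
    by (intro exI[of _ "\<lambda>j. c (j - m)"]) simp
qed blast

theorem sat_F: "\<forall>j. e j \<in> K \<Longrightarrow> sat K e (F p) = sat UNIV (dec e) p"
proof (induction p arbitrary: e)
  case (FEq s t)
  have "\<forall>k<n. teval e (T s k) \<in> K" "\<forall>k<n. teval e (T t k) \<in> K"
    using FEq.prems teval_K tparams_T by blast+
  moreover have "sat K e (F (FEq s t)) = (\<forall>k<n. teval e (T s k) = teval e (T t k))"
    by (auto simp: sat_conj)
  ultimately show ?case
    by (simp add: teval_T coords_eq_iff)
next
  case (FEx i p)
  let ?upd = "\<lambda>a j. if j \<in> set (block i) then a j else e j"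
  have IH: "sat K (?upd a) (F p) = sat UNIV ((dec e)(i := (\<Sum>k<n. a (n * i + k) * b k))) p"
    if "\<forall>k<n. a (n * i + k) \<in> K" for a
  proof -
    have "\<forall>j. ?upd a j \<in> K"
      using FEx.prems that unfolding set_block by auto
    from FEx.IH[OF this] show ?thesis
      by (simp only: dec_override)
  qed
  have "sat K e (F (FEx i p)) = (\<exists>a. (\<forall>k<n. a (n * i + k) \<in> K) \<and> sat K (?upd a) (F p))"
    by (simp add: sat_exs ball_block)
  also have "\<dots> = (\<exists>a. (\<forall>k<n. a (n * i + k) \<in> K) \<and>
      sat UNIV ((dec e)(i := (\<Sum>k<n. a (n * i + k) * b k))) p)"
    by (rule ex_cong1) (use IH in blast)
  also have "\<dots> = (\<exists>c. (\<forall>k<n. c k \<in> K) \<and> sat UNIV ((dec e)(i := (\<Sum>k<n. c k * b k))) p)"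
    by (rule ex_shift[where m = "n * i"
        and Q = "\<lambda>c. (\<forall>k<n. c k \<in> K) \<and> sat UNIV ((dec e)(i := (\<Sum>k<n. c k * b k))) p"])
  also have "\<dots> = sat UNIV (dec e) (FEx i p)"
    using ex_coords[of "\<lambda>x. sat UNIV ((dec e)(i := x)) p"] by simp
  finally show ?case .
qed simp_all

subsection \<open>Coding tuples by coordinate tuples\<close>

definition enc :: "'a list \<Rightarrow> 'a list" where
  "enc xs = map (\<lambda>j. coord (xs ! (j div n)) (j mod n)) [0..<n * length xs]"

definition decl :: "'a list \<Rightarrow> 'a list" where
  "decl ys = map (\<lambda>i. \<Sum>k<n. ys ! (n * i + k) * b k) [0..<length ys div n]"

lemma length_enc [simp]: "length (enc xs) = n * length xs"
  by (simp add: enc_def)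

lemma enc_nth: "j < n * length xs \<Longrightarrow> enc xs ! j = coord (xs ! (j div n)) (j mod n)"
  by (simp add: enc_def)

lemma block_index_less: "i < d \<Longrightarrow> k < n \<Longrightarrow> n * i + k < n * d"
proof -
  assume "i < d" "k < n"
  then have "n * i + k < n * (i + 1)" by simp
  also have "\<dots> \<le> n * d" using \<open>i < d\<close> by (intro mult_le_mono2) simp
  finally show ?thesis .
qed

lemma enc_tuples: "enc xs \<in> tuples K (n * length xs)"
  by (auto simp: tuples_def enc_def coord_K)

lemma decl_enc: "decl (enc xs) = xs"
proof (rule nth_equalityI)
  show "length (decl (enc xs)) = length xs"
    using n_pos by (simp add: decl_def)
  fix i assume "i < length (decl (enc xs))"
  then have i: "i < length xs" using n_pos by (simp add: decl_def)
  have "decl (enc xs) ! i = (\<Sum>k<n. enc xs ! (n * i + k) * b k)"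
    using i n_pos by (simp add: decl_def)
  also have "\<dots> = (\<Sum>k<n. coord (xs ! i) k * b k)"
    using i by (intro sum.cong refl) (simp add: enc_nth block_index_less)
  also have "\<dots> = xs ! i" by (rule coord_sum)
  finally show "decl (enc xs) ! i = xs ! i" .
qed

lemma inj_enc: "inj enc"
  by (metis decl_enc injI)

lemma enc_decl:
  assumes "ys \<in> tuples K (n * d)"
  shows "enc (decl ys) = ys" "length (decl ys) = d"
proof -
  have ys: "length ys = n * d" "set ys \<subseteq> K" using assms by (auto simp: tuples_def)
  show ld: "length (decl ys) = d" using ys n_pos by (simp add: decl_def)
  show "enc (decl ys) = ys"
  proof (rule nth_equalityI)
    show "length (enc (decl ys)) = length ys" using ld ys by simp
    fix j assume "j < length (enc (decl ys))"
    then have j: "j < n * d" using ld by simp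
    have jd: "j div n < d" using j n_pos by (simp add: div_less_iff_less_mult mult.commute)
    have jm: "j mod n < n" using n_pos by simp
    have inK: "\<forall>k<n. ys ! (n * (j div n) + k) \<in> K"
      using ys jd by (auto intro!: subsetD[OF ys(2)] nth_mem simp: block_index_less)
    have "enc (decl ys) ! j = coord (\<Sum>k<n. ys ! (n * (j div n) + k) * b k) (j mod n)"
      using j ld jd ys n_pos by (simp add: enc_nth decl_def)
    also have "\<dots> = ys ! (n * (j div n) + j mod n)"
      using coord_eq[of "\<lambda>k. ys ! (n * (j div n) + k)", OF inK jm] .
    also have "\<dots> = ys ! j" by simp
    finally show "enc (decl ys) ! j = ys ! j" .
  qed
qed

text \<open>The coding is compatible with concatenation, which is how the graphs of addition and
  multiplication (triples of tuples) are coded.\<close>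

lemma enc_append: "enc (xs @ ys) = enc xs @ enc ys"
proof (rule nth_equalityI)
  show "length (enc (xs @ ys)) = length (enc xs @ enc ys)"
    by (simp add: algebra_simps)
  fix j assume "j < length (enc (xs @ ys))"
  then have j: "j < n * length xs + n * length ys" by (simp add: algebra_simps)
  show "enc (xs @ ys) ! j = (enc xs @ enc ys) ! j"
  proof (cases "j < n * length xs")
    case True
    then have "j div n < length xs"
      using n_pos by (simp add: div_less_iff_less_mult mult.commute)
    then show ?thesis using True j by (simp add: enc_nth nth_append algebra_simps)
  next
    case False
    then obtain j' where jj: "j = n * length xs + j'"
      by (metis le_add_diff_inverse not_less)
    then have "j' < n * length ys" using j by simp
    moreover have "j div n = length xs + j' div n" "j mod n = j' mod n"
      using n_pos jj by simp_all
    ultimately show ?thesis using False jj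
      by (simp add: enc_nth nth_append algebra_simps)
  qed
qed

lemma dec_tuple_env:
  assumes "length xs = d"
  shows "dec (tuple_env (n * d) (enc xs)) = tuple_env d xs"
proof
  fix i
  show "dec (tuple_env (n * d) (enc xs)) i = tuple_env d xs i"
  proof (cases "i < d")
    case True
    have "dec (tuple_env (n * d) (enc xs)) i = (\<Sum>k<n. coord (xs ! i) k * b k)"
      unfolding dec_def using True assms by (intro sum.cong refl) (simp add: block_index_less enc_nth)
    then show ?thesis using True coord_sum by simp
  next
    case False
    then have "\<not> n * i + k < n * d" for k
      using mult_le_mono2[of d i n] by linarith
    then show ?thesis using False by (simp add: dec_def)
  qed
qed

lemma sat_F_tuple:
  assumes ys: "ys \<in> tuples K (n * d)"
  shows "sat K (tuple_env (n * d) ys) (F \<phi>) = sat UNIV (tuple_env d (decl ys)) \<phi>"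
proof -
  have "\<forall>j. tuple_env (n * d) ys j \<in> K"
    using ys K0 by (auto simp: tuples_def intro!: subsetD[of "set ys" K] nth_mem)
  then have "sat K (tuple_env (n * d) ys) (F \<phi>) = sat UNIV (dec (tuple_env (n * d) ys)) \<phi>"
    by (rule sat_F)
  also have "dec (tuple_env (n * d) ys) = tuple_env d (decl ys)"
    using dec_tuple_env[OF enc_decl(2)[OF ys]] unfolding enc_decl(1)[OF ys] .
  finally show ?thesis .
qed

lemma image_enc:
  assumes "D \<subseteq> tuples UNIV d"
  shows "enc ` D = {ys \<in> tuples K (n * d). decl ys \<in> D}"
proof (intro set_eqI iffI)
  fix ys assume "ys \<in> enc ` D"
  then obtain xs where "xs \<in> D" "ys = enc xs" by blast
  moreover then have "length xs = d" using assms by (auto simp: tuples_def)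
  ultimately show "ys \<in> {ys \<in> tuples K (n * d). decl ys \<in> D}"
    using enc_tuples[of xs] by (simp add: decl_enc)
next
  fix ys assume ys: "ys \<in> {ys \<in> tuples K (n * d). decl ys \<in> D}"
  then have "ys = enc (decl ys)"
    using enc_decl(1)[of ys d] by simp
  then show "ys \<in> enc ` D"
    using ys by blast
qed

theorem definable_enc:
  assumes "definable UNIV d D"
  shows "definable K (n * d) (enc ` D)"
proof -
  obtain \<phi> where D: "D = {xs \<in> tuples UNIV d. sat UNIV (tuple_env d xs) \<phi>}"
    using assms by (auto simp: definable_def)
  have "D \<subseteq> tuples UNIV d"
    unfolding D by blast
  then have "enc ` D = {ys \<in> tuples K (n * d). decl ys \<in> D}"
    by (rule image_enc)
  also have "\<dots> = {ys \<in> tuples K (n * d). sat K (tuple_env (n * d) ys) (F \<phi>)}"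
  proof -
    have "decl ys \<in> D \<longleftrightarrow> sat K (tuple_env (n * d) ys) (F \<phi>)" if ys: "ys \<in> tuples K (n * d)" for ys
      using enc_decl(2)[OF ys] sat_F_tuple[OF ys] unfolding D by (simp add: tuples_def)
    then show ?thesis by blast
  qed
  finally show ?thesis
    unfolding definable_def by (intro exI[of _ "F \<phi>"] conjI fparams_F)
qed

lemma enc_graph:
  "{(enc \<circ> f) a @ (enc \<circ> f) b @ (enc \<circ> f) (g a b) | a b. True} =
   enc ` {f a @ f b @ f (g a b) | a b. True}"
proof -
  have "enc ` {f a @ f b @ f (g a b) | a b. True} = {enc (f a @ f b @ f (g a b)) | a b. True}"
    by blast
  then show ?thesis by (simp add: enc_append)
qed

theorem model_of_Z_transfer:
  assumes "has_model_of_Z (UNIV :: 'a set)"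
  shows "has_model_of_Z K"
proof -
  obtain d and f :: "int \<Rightarrow> 'a list" and D where
    M: "D \<subseteq> tuples UNIV d" "bij_betw f UNIV D" "definable UNIV d D"
       "definable UNIV (3 * d) {f a @ f b @ f (a + b) | a b. True}"
       "definable UNIV (3 * d) {f a @ f b @ f (a * b) | a b. True}"
    using assms unfolding has_model_of_Z_def by blast
  have "enc ` D \<subseteq> tuples K (n * d)"
    using image_enc[OF M(1)] by blast
  moreover have "bij_betw (enc \<circ> f) UNIV (enc ` D)"
    using bij_betw_trans[OF M(2) inj_on_imp_bij_betw[OF inj_on_subset[OF inj_enc subset_UNIV]]] .
  moreover have "definable K (3 * (n * d)) {(enc \<circ> f) a @ (enc \<circ> f) b @ (enc \<circ> f) (a + b) | a b. True}"
    using definable_enc[OF M(4)] unfolding enc_graph by (simp add: mult_ac)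
  moreover have "definable K (3 * (n * d)) {(enc \<circ> f) a @ (enc \<circ> f) b @ (enc \<circ> f) (a * b) | a b. True}"
    using definable_enc[OF M(5)] unfolding enc_graph by (simp add: mult_ac)
  ultimately show ?thesis
    unfolding has_model_of_Z_def using definable_enc[OF M(3)] by blast
qed

end

theorem proposition7p1:
  fixes K :: "'a::field set"
  assumes "is_subfield K"
    and "finite_ext K"
    and "\<not> alg_closed_field TYPE('a)"
    and "has_model_of_Z (UNIV :: 'a set)"
  shows "has_model_of_Z K"
proof -
  obtain n b where "kbasis K n b"
    using basis_exists[OF assms(1,2)] by blast
  then show ?thesis
    using kbasis.model_of_Z_transfer[OF _ assms(4)] by blast
qed

end
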